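(* Let $(\Omega_i,\Sigma_i,\mathcal{M}_i,\mathcal{F}_i,\mathcal{T}_i)$, $i=1,\dots,n$, be vague membership spaces with $\mathcal{T}_i=\{N_i,\oplus_i,\otimes_i\}$, and let $\Sigma^n=\Sigma_1\times\cdots\times\Sigma_n$. For $A=(A_1,\dots,A_n),B=(B_1,\dots,B_n)\in\Sigma^n$ define $A\equiv B$ iff $\mathcal{M}_i(A_i)=\mathcal{M}_i(B_i)$ for all $i=1,\dots,n$. Then $\equiv$ is an equivalence relation on $\Sigma^n$, and on the set $\overline{\Sigma^n}$ of equivalence classes the relation $[A]\precsim[B]$ iff $\mathcal{M}_i(A_i)\le\mathcal{M}_i(B_i)$ for all $i$ is a well-defined partial order. If moreover every $\oplus_i$ is the maximum t-conorm ($x\oplus_i y=\max\{x,y\}$), then $(\overline{\Sigma^n};\precsim)$ is a complete lattice.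
   Context: A t-norm is a commutative, associative binary operation $\otimes$ on $[0,1]$ that is nondecreasing in each argument and satisfies $x\otimes 1=x$; a t-conorm $\oplus$ satisfies the same conditions except that $x\oplus 0=x$. A strong negation is a continuous, strictly decreasing map $N:[0,1]\to[0,1]$ with $N(0)=1$, $N(1)=0$ and $N(N(x))=x$. For a sequence $(a_n)$ in $[0,1]$, $\bigoplus_{n=1}^\infty a_n:=\lim_{m\to\infty}(a_1\oplus\cdots\oplus a_m)$ and $\bigotimes_{n=1}^\infty a_n:=\lim_{m\to\infty}(a_1\otimes\cdots\otimes a_m)$ (monotone limits); for an arbitrary family $(a_i)_{i\in I}$, $\bigoplus_{i\in I}a_i:=\sup\{\bigoplus_{i\in J}a_i: J\subseteq I \text{ finite}\}$, the empty $\oplus$ being $0$. A vague membership space $(\Omega,\Sigma,\mathcal{M},\mathcal{F},\mathcal{T})$ consists of: a nonempty set $\Omega$ (elementary vague attributes); two symbols $\bot,\top\notin\Omega$; the set $\Sigma$ of formal terms generated from $\Omega\cup\{\bot,\top\}$ by a unary operation $\neg$, binary operations $\veebar,\barwedge$ and countable operations $\veebar_{n=1}^\infty,\barwedge_{n=1}^\infty$ (here $\mathcal{F}=\{\bot,\top,\neg,\barwedge,\veebar\}$), where a finite join $A_1\veebar\cdots\veebar A_n$ is identified with the countable join of the sequence $A_1,\dots,A_n,\bot,\bot,\dots$ and a finite meet $A_1\barwedge\cdots\barwedge A_n$ with the countable meet of $A_1,\dots,A_n,\top,\top,\dots$; a triple $\mathcal{T}=\{N,\oplus,\otimes\}$ of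 a strong negation $N$, a t-norm $\otimes$ and a t-conorm $\oplus$ that are $N$-dual, i.e. $x\oplus y=N(N(x)\otimes N(y))$; and a map $\mathcal{M}:\Sigma\to[0,1]$ satisfying (I) there is $p\in\Omega$ with $\mathcal{M}(p)>0$, and if $\mathcal{M}(p_0)=1$ for some $p_0\in\Omega$ then $\mathcal{M}(p)=0$ for all $p\in\Omega\setminus\{p_0\}$; (II) $\mathcal{M}(\bot)=0$, $\mathcal{M}(\top)=1$; (III) $\mathcal{M}(\neg A)\le N(\mathcal{M}(A))$ for all $A\in\Sigma$; (IV) for every sequence $A_1,A_2,\dots\in\Sigma$, $\mathcal{M}(\veebar_{n=1}^\infty A_n)=\bigoplus_{n=1}^\infty\mathcal{M}(A_n)$ and $\mathcal{M}(\barwedge_{n=1}^\infty A_n)=\bigotimes_{n=1}^\infty\mathcal{M}(A_n)$; (V) for every $p\in\Omega$, $\mathcal{M}(\neg p)\ge\bigoplus_{q\in\Omega\setminus\{p\}}\mathcal{M}(q)$. The space is called regular if $\mathcal{M}(\neg A)=N(\mathcal{M}(A))$ for all $A\in\Sigma$. The product vague membership space of $n$ such spaces has attribute set $\Sigma^n=\Sigma_1\times\cdots\times\Sigma_n$, operations defined componentwise, and membership measure $\mathcal{M}^n(A_1,\dots,A_n)=(\mathcal{M}_1(A_1),\dots,\mathcal{M}_n(A_n))\in[0,1]^n$, with $[0,1]^n$ ordered componentwise. *)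

theory Defs
  imports Complex_Main "HOL-Library.FuncSet"
begin

text \<open>Terms generated from elementary attributes, bot, top, negation and countable
  join/meet.  Finite joins/meets are identified with countable ones padded by bot/top.\<close>

datatype 'a vterm = Atom 'a | VBot | VTop | VNeg "'a vterm"
  | VJoin "nat \<Rightarrow> 'a vterm" | VMeet "nat \<Rightarrow> 'a vterm"

definition vjoin2 :: "'a vterm \<Rightarrow> 'a vterm \<Rightarrow> 'a vterm" where
  "vjoin2 A B = VJoin (\<lambda>k. if k = 0 then A else if k = 1 then B else VBot)"

definition vmeet2 :: "'a vterm \<Rightarrow> 'a vterm \<Rightarrow> 'a vterm" where
  "vmeet2 A B = VMeet (\<lambda>k. if k = 0 then A else if k = 1 then B else VTop)"

definition vterms :: "'a set \<Rightarrow> 'a vterm set" where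
  "vterms \<Omega> = {t. set_vterm t \<subseteq> \<Omega>}"

definition unit_closed :: "(real \<Rightarrow> real \<Rightarrow> real) \<Rightarrow> bool" where
  "unit_closed f \<longleftrightarrow> (\<forall>x\<in>{0..1}. \<forall>y\<in>{0..1}. f x y \<in> {0..1})"

definition tnorm :: "(real \<Rightarrow> real \<Rightarrow> real) \<Rightarrow> bool" where
  "tnorm T \<longleftrightarrow> unit_closed T
     \<and> (\<forall>x\<in>{0..1}. \<forall>y\<in>{0..1}. T x y = T y x)
     \<and> (\<forall>x\<in>{0..1}. \<forall>y\<in>{0..1}. \<forall>z\<in>{0..1}. T (T x y) z = T x (T y z))
     \<and> (\<forall>x\<in>{0..1}. \<forall>x'\<in>{0..1}. \<forall>y\<in>{0..1}. x \<le> x' \<longrightarrow> T x y \<le> T x' y)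
     \<and> (\<forall>x\<in>{0..1}. T x 1 = x)"

definition tconorm :: "(real \<Rightarrow> real \<Rightarrow> real) \<Rightarrow> bool" where
  "tconorm S \<longleftrightarrow> unit_closed S
     \<and> (\<forall>x\<in>{0..1}. \<forall>y\<in>{0..1}. S x y = S y x)
     \<and> (\<forall>x\<in>{0..1}. \<forall>y\<in>{0..1}. \<forall>z\<in>{0..1}. S (S x y) z = S x (S y z))
     \<and> (\<forall>x\<in>{0..1}. \<forall>x'\<in>{0..1}. \<forall>y\<in>{0..1}. x \<le> x' \<longrightarrow> S x y \<le> S x' y)
     \<and> (\<forall>x\<in>{0..1}. S x 0 = x)"

definition strong_negation :: "(real \<Rightarrow> real) \<Rightarrow> bool" where
  "strong_negation N \<longleftrightarrow> N ` {0..1} \<subseteq> {0..1}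
     \<and> continuous_on {0..1} N
     \<and> (\<forall>x\<in>{0..1}. \<forall>y\<in>{0..1}. x < y \<longrightarrow> N y < N x)
     \<and> N 0 = 1 \<and> N 1 = 0
     \<and> (\<forall>x\<in>{0..1}. N (N x) = x)"

definition N_dual :: "(real \<Rightarrow> real) \<Rightarrow> (real \<Rightarrow> real \<Rightarrow> real) \<Rightarrow> (real \<Rightarrow> real \<Rightarrow> real) \<Rightarrow> bool" where
  "N_dual N S T \<longleftrightarrow> (\<forall>x\<in>{0..1}. \<forall>y\<in>{0..1}. S x y = N (T (N x) (N y)))"

fun fin_op :: "(real \<Rightarrow> real \<Rightarrow> real) \<Rightarrow> real \<Rightarrow> (nat \<Rightarrow> real) \<Rightarrow> nat \<Rightarrow> real" where
  "fin_op f e a 0 = e"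
| "fin_op f e a (Suc m) = f (fin_op f e a m) (a m)"

definition seq_op :: "(real \<Rightarrow> real \<Rightarrow> real) \<Rightarrow> real \<Rightarrow> (nat \<Rightarrow> real) \<Rightarrow> real" where
  "seq_op f e a = lim (fin_op f e a)"

definition fam_oplus :: "(real \<Rightarrow> real \<Rightarrow> real) \<Rightarrow> ('i \<Rightarrow> real) \<Rightarrow> 'i set \<Rightarrow> real" where
  "fam_oplus S a I = Sup {Finite_Set.fold (\<lambda>i acc. S (a i) acc) 0 J | J. finite J \<and> J \<subseteq> I}"

definition vms ::
  "'a set \<Rightarrow> ('a vterm \<Rightarrow> real) \<Rightarrow> (real \<Rightarrow> real) \<Rightarrow> (real \<Rightarrow> real \<Rightarrow> real) \<Rightarrow> (real \<Rightarrow> real \<Rightarrow> real) \<Rightarrow> bool"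
  where
  "vms \<Omega> M N S T \<longleftrightarrow>
     \<Omega> \<noteq> {}
   \<and> strong_negation N \<and> tnorm T \<and> tconorm S \<and> N_dual N S T
   \<and> (\<forall>A\<in>vterms \<Omega>. M A \<in> {0..1})
   \<comment> \<open>(I)\<close>
   \<and> (\<exists>p\<in>\<Omega>. M (Atom p) > 0)
   \<and> (\<forall>p0\<in>\<Omega>. M (Atom p0) = 1 \<longrightarrow> (\<forall>p\<in>\<Omega> - {p0}. M (Atom p) = 0))
   \<comment> \<open>(II)\<close>
   \<and> M VBot = 0 \<and> M VTop = 1
   \<comment> \<open>(III)\<close>
   \<and> (\<forall>A\<in>vterms \<Omega>. M (VNeg A) \<le> N (M A))
   \<comment> \<open>(IV)\<close>
   \<and> (\<forall>A. (\<forall>k. A k \<in> vterms \<Omega>) \<longrightarrow>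
          M (VJoin A) = seq_op S 0 (\<lambda>k. M (A k))
        \<and> M (VMeet A) = seq_op T 1 (\<lambda>k. M (A k)))
   \<comment> \<open>(V)\<close>
   \<and> (\<forall>p\<in>\<Omega>. M (VNeg (Atom p)) \<ge> fam_oplus S (\<lambda>q. M (Atom q)) (\<Omega> - {p}))"

definition is_lub_on :: "'b set \<Rightarrow> ('b \<times> 'b) set \<Rightarrow> 'b set \<Rightarrow> 'b \<Rightarrow> bool" where
  "is_lub_on C r B s \<longleftrightarrow> s \<in> C \<and> (\<forall>x\<in>B. (x, s) \<in> r)
     \<and> (\<forall>u\<in>C. (\<forall>x\<in>B. (x, u) \<in> r) \<longrightarrow> (s, u) \<in> r)"

definition is_glb_on :: "'b set \<Rightarrow> ('b \<times> 'b) set \<Rightarrow> 'b set \<Rightarrow> 'b \<Rightarrow> bool" where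
  "is_glb_on C r B s \<longleftrightarrow> s \<in> C \<and> (\<forall>x\<in>B. (s, x) \<in> r)
     \<and> (\<forall>u\<in>C. (\<forall>x\<in>B. (u, x) \<in> r) \<longrightarrow> (u, s) \<in> r)"

definition complete_lattice_on :: "'b set \<Rightarrow> ('b \<times> 'b) set \<Rightarrow> bool" where
  "complete_lattice_on C r \<longleftrightarrow> partial_order_on C r
     \<and> (\<forall>B\<subseteq>C. \<exists>s. is_lub_on C r B s) \<and> (\<forall>B\<subseteq>C. \<exists>s. is_glb_on C r B s)"

definition prod_terms :: "nat \<Rightarrow> (nat \<Rightarrow> 'a set) \<Rightarrow> (nat \<Rightarrow> 'a vterm) set" where
  "prod_terms n \<Omega> = PiE {1..n} (\<lambda>i. vterms (\<Omega> i))"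

definition meq :: "nat \<Rightarrow> (nat \<Rightarrow> 'a set) \<Rightarrow> (nat \<Rightarrow> 'a vterm \<Rightarrow> real)
    \<Rightarrow> ((nat \<Rightarrow> 'a vterm) \<times> (nat \<Rightarrow> 'a vterm)) set" where
  "meq n \<Omega> M = {(A, B). A \<in> prod_terms n \<Omega> \<and> B \<in> prod_terms n \<Omega>
       \<and> (\<forall>i\<in>{1..n}. M i (A i) = M i (B i))}"

definition mle :: "nat \<Rightarrow> (nat \<Rightarrow> 'a vterm \<Rightarrow> real) \<Rightarrow> (nat \<Rightarrow> 'a vterm) \<Rightarrow> (nat \<Rightarrow> 'a vterm) \<Rightarrow> bool" where
  "mle n M A B \<longleftrightarrow> (\<forall>i\<in>{1..n}. M i (A i) \<le> M i (B i))"

definition class_le :: "nat \<Rightarrow> (nat \<Rightarrow> 'a set) \<Rightarrow> (nat \<Rightarrow> 'a vterm \<Rightarrow> real)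
    \<Rightarrow> ((nat \<Rightarrow> 'a vterm) set \<times> (nat \<Rightarrow> 'a vterm) set) set" where
  "class_le n \<Omega> M = {(X, Y). X \<in> prod_terms n \<Omega> // meq n \<Omega> M \<and> Y \<in> prod_terms n \<Omega> // meq n \<Omega> M
       \<and> (\<exists>A\<in>X. \<exists>B\<in>Y. mle n M A B)}"

end

theory Submission
  imports Defs "HOL-Analysis.Elementary_Metric_Spaces"
begin

text \<open>Equivalence and order on \<open>\<Sigma>\<^sup>n\<close> are pulled back from \<open>[0,1]\<^sup>n\<close> along
  \<open>A \<mapsto> (\<M>\<^sub>i(A\<^sub>i))\<^sub>i\<close>, so the first three claims are bookkeeping.
  For completeness it suffices to construct least upper bounds, a greatest lower bound being
  the least upper bound of the lower bounds.  With the maximum t-conorm a countable join is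
  mapped to the supremum of the memberships, and every supremum of a set of reals is the
  supremum of a sequence from that set; hence each range \<open>\<M>\<^sub>i(\<Sigma>\<^sub>i)\<close>
  contains the suprema of its subsets (with \<open>0 = \<M>\<^sub>i(\<bottom>)\<close> for the empty one),
  and the componentwise supremum of any family of classes is again the image of a class.\<close>

lemma complete_lattice_onI_lub:
  assumes "partial_order_on C r" and lub: "\<forall>B\<subseteq>C. \<exists>s. is_lub_on C r B s"
  shows "complete_lattice_on C r"
proof -
  have "\<exists>s. is_glb_on C r B s" if B: "B \<subseteq> C" for B
  proof -
    let ?L = "{u\<in>C. \<forall>x\<in>B. (u, x) \<in> r}"
    have "?L \<subseteq> C" by blast
    then obtain s where "is_lub_on C r ?L s" using lub by blast
    then have s: "s \<in> C" "\<forall>u\<in>?L. (u, s) \<in> r"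
      and least: "\<forall>u\<in>C. (\<forall>x\<in>?L. (x, u) \<in> r) \<longrightarrow> (s, u) \<in> r"
      unfolding is_lub_on_def by auto
    have "(s, x) \<in> r" if "x \<in> B" for x
      using least that B by blast
    then have "is_glb_on C r B s" using s unfolding is_glb_on_def by blast
    then show ?thesis ..
  qed
  then show ?thesis using assms unfolding complete_lattice_on_def by blast
qed

lemma Sup_eq_SUP_seq:
  fixes S :: "real set"
  assumes "S \<noteq> {}" "bdd_above S"
  obtains f :: "nat \<Rightarrow> real" where "range f \<subseteq> S" "(SUP k. f k) = Sup S"
proof -
  obtain f where f: "\<And>k. f k \<in> S" "f \<longlonglongrightarrow> Sup S"
    using closure_contains_Sup[OF assms] closure_sequential by blast
  have bdd: "bdd_above (range f)" using assms(2) f(1) by (meson bdd_above_mono image_subsetI)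
  have "f k \<le> (SUP k. f k)" for k using bdd by (simp add: cSUP_upper)
  then have "Sup S \<le> (SUP k. f k)" using LIMSEQ_le_const2[OF f(2)] by blast
  moreover have "(SUP k. f k) \<le> Sup S" using f(1) assms by (intro cSUP_least cSup_upper) auto
  ultimately show thesis using f(1) by (intro that[of f]) auto
qed

lemma fin_op_max_unit:
  assumes "\<forall>x\<in>{0..1}. \<forall>y\<in>{0..1}. f x y = max x y" and "\<forall>k. b k \<in> {0..1::real}"
  shows "fin_op f 0 b m \<in> {0..1}"
  using assms by (induction m) auto

lemma seq_op_max:
  assumes f: "\<forall>x\<in>{0..1}. \<forall>y\<in>{0..1}. f x y = max x y" and b: "\<forall>k. b k \<in> {0..1::real}"
  shows "seq_op f 0 b = (SUP k. b k)"
proof -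
  let ?p = "fin_op f 0 b"
  have step: "?p (Suc m) = max (?p m) (b m)" for m
    using f b fin_op_max_unit[OF f b, of m] by simp
  have bdd_b: "bdd_above (range b)" using b by (auto intro: bdd_aboveI2[of _ _ 1])
  have p_le: "?p m \<le> (SUP k. b k)" for m
  proof (induction m)
    case 0
    have "0 \<le> b 0" using b by simp
    then show ?case using cSUP_upper[OF UNIV_I bdd_b, of 0] by simp
  next
    case (Suc m)
    then show ?case using step cSUP_upper[OF UNIV_I bdd_b] by simp
  qed
  have inc: "incseq ?p" by (rule incseq_SucI) (metis step max.cobounded1)
  have bdd_p: "bdd_above (range ?p)" using p_le by (intro bdd_aboveI2)
  have lim: "?p \<longlonglongrightarrow> (SUP m. ?p m)" by (rule LIMSEQ_incseq_SUP[OF bdd_p inc])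
  have "(SUP m. ?p m) = (SUP k. b k)"
  proof (rule antisym)
    show "(SUP m. ?p m) \<le> (SUP k. b k)" using p_le by (rule cSUP_least[rotated]) simp
    have "b k \<le> (SUP m. ?p m)" for k
      using step[of k] cSUP_upper[OF UNIV_I bdd_p, of "Suc k"] by simp
    then show "(SUP k. b k) \<le> (SUP m. ?p m)" by (rule cSUP_least[rotated]) simp
  qed
  with lim show ?thesis unfolding seq_op_def by (metis limI)
qed

lemma vms_M_unit: "vms \<Omega> M N S T \<Longrightarrow> A \<in> vterms \<Omega> \<Longrightarrow> M A \<in> {0..1}"
  unfolding vms_def by blast

lemma vms_join_max:
  assumes v: "vms \<Omega> M N S T" and S: "\<forall>x\<in>{0..1}. \<forall>y\<in>{0..1}. S x y = max x y"
    and a: "\<forall>k. a k \<in> vterms \<Omega>"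
  shows "M (VJoin a) = (SUP k. M (a k))"
proof -
  have "M (VJoin a) = seq_op S 0 (\<lambda>k. M (a k))" using v a unfolding vms_def by blast
  also have "\<dots> = (SUP k. M (a k))" using S vms_M_unit[OF v] a by (intro seq_op_max) auto
  finally show ?thesis .
qed

lemma vms_Sup_attained:
  assumes v: "vms \<Omega> M N S T" and S: "\<forall>x\<in>{0..1}. \<forall>y\<in>{0..1}. S x y = max x y"
    and W: "W \<subseteq> M ` vterms \<Omega>"
  shows "\<exists>t\<in>vterms \<Omega>. M t = Sup (insert 0 W)"
proof -
  have "VBot \<in> vterms \<Omega>" by (simp add: vterms_def)
  moreover have "M VBot = 0" using v by (simp add: vms_def)
  ultimately have W0: "insert 0 W \<subseteq> M ` vterms \<Omega>" using W by (metis image_eqI insert_subset)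
  then have "insert 0 W \<subseteq> {..1}" using vms_M_unit[OF v] by auto
  then have bdd: "bdd_above (insert 0 W)" by (meson bdd_above_Iic bdd_above_mono)
  obtain f :: "nat \<Rightarrow> real" where f: "range f \<subseteq> insert 0 W" "(SUP k. f k) = Sup (insert 0 W)"
    by (rule Sup_eq_SUP_seq[OF insert_not_empty bdd])
  have "f k \<in> M ` vterms \<Omega>" for k using f(1) W0 by blast
  then have "\<forall>k. \<exists>t. t \<in> vterms \<Omega> \<and> M t = f k" by (metis imageE)
  then obtain a where a: "\<forall>k. a k \<in> vterms \<Omega> \<and> M (a k) = f k" by (metis choice)
  then have "VJoin a \<in> vterms \<Omega>" unfolding vterms_def by auto
  moreover have "M (VJoin a) = Sup (insert 0 W)" using vms_join_max[OF v S] a f(2) by simp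
  ultimately show ?thesis ..
qed

lemma meq_equiv: "equiv (prod_terms n \<Omega>) (meq n \<Omega> M)"
  unfolding equiv_def refl_on_def sym_def trans_def meq_def by auto

lemma mle_respects_meq:
  "(A, A') \<in> meq n \<Omega> M \<Longrightarrow> (B, B') \<in> meq n \<Omega> M \<Longrightarrow> mle n M A B \<longleftrightarrow> mle n M A' B'"
  unfolding meq_def mle_def by auto

lemma class_leI:
  "X \<in> prod_terms n \<Omega> // meq n \<Omega> M \<Longrightarrow> Y \<in> prod_terms n \<Omega> // meq n \<Omega> M
    \<Longrightarrow> A \<in> X \<Longrightarrow> B \<in> Y \<Longrightarrow> mle n M A B \<Longrightarrow> (X, Y) \<in> class_le n \<Omega> M"
  unfolding class_le_def by blast

lemma class_leD:
  assumes "(X, Y) \<in> class_le n \<Omega> M" "A \<in> X" "B \<in> Y"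
  shows "mle n M A B"
proof -
  obtain A' B' where X: "X \<in> prod_terms n \<Omega> // meq n \<Omega> M" and Y: "Y \<in> prod_terms n \<Omega> // meq n \<Omega> M"
    and "A' \<in> X" "B' \<in> Y" "mle n M A' B'"
    using assms(1) unfolding class_le_def by blast
  moreover have "(A', A) \<in> meq n \<Omega> M"
    by (rule in_quotient_imp_in_rel[OF meq_equiv X]) (simp add: \<open>A' \<in> X\<close> assms(2))
  moreover have "(B', B) \<in> meq n \<Omega> M"
    by (rule in_quotient_imp_in_rel[OF meq_equiv Y]) (simp add: \<open>B' \<in> Y\<close> assms(3))
  ultimately show ?thesis using mle_respects_meq by blast
qed

lemma partial_order_on_class_le:
  "partial_order_on (prod_terms n \<Omega> // meq n \<Omega> M) (class_le n \<Omega> M)"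
proof -
  let ?C = "prod_terms n \<Omega> // meq n \<Omega> M"
  have ne: "\<exists>A. A \<in> X" if "X \<in> ?C" for X
    using in_quotient_imp_non_empty[OF meq_equiv that] by blast
  have field: "class_le n \<Omega> M \<subseteq> ?C \<times> ?C" unfolding class_le_def by auto
  have "refl_on ?C (class_le n \<Omega> M)"
  proof (rule refl_onI)
    fix X assume X: "X \<in> ?C"
    then obtain A where "A \<in> X" using ne by blast
    moreover have "mle n M A A" by (simp add: mle_def)
    ultimately show "(X, X) \<in> class_le n \<Omega> M" using X by (intro class_leI)
  qed
  moreover have "trans (class_le n \<Omega> M)"
  proof (rule transI)
    fix X Y Z assume XY: "(X, Y) \<in> class_le n \<Omega> M" and YZ: "(Y, Z) \<in> class_le n \<Omega> M"
    then have C: "X \<in> ?C" "Y \<in> ?C" "Z \<in> ?C" using field by blast+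
    obtain A B D where "A \<in> X" "B \<in> Y" "D \<in> Z" using ne[OF C(1)] ne[OF C(2)] ne[OF C(3)] by blast
    then have "mle n M A B" "mle n M B D" using class_leD[OF XY] class_leD[OF YZ] by blast+
    then have "mle n M A D" unfolding mle_def by (meson order_trans)
    then show "(X, Z) \<in> class_le n \<Omega> M" using C \<open>A \<in> X\<close> \<open>D \<in> Z\<close> by (intro class_leI)
  qed
  moreover have "antisym (class_le n \<Omega> M)"
  proof (rule antisymI)
    fix X Y assume XY: "(X, Y) \<in> class_le n \<Omega> M" and YX: "(Y, X) \<in> class_le n \<Omega> M"
    then have C: "X \<in> ?C" "Y \<in> ?C" using field by blast+
    obtain A B where AB: "A \<in> X" "B \<in> Y" using ne[OF C(1)] ne[OF C(2)] by blast
    then have "mle n M A B" "mle n M B A" using class_leD[OF XY] class_leD[OF YX] by blast+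
    moreover have "A \<in> prod_terms n \<Omega>" "B \<in> prod_terms n \<Omega>"
      using AB C in_quotient_imp_subset[OF meq_equiv] by blast+
    ultimately have "(A, B) \<in> meq n \<Omega> M" unfolding mle_def meq_def by (auto intro: order_antisym)
    then show "X = Y" using quotient_eq_iff[OF meq_equiv C AB] by blast
  qed
  ultimately show ?thesis unfolding partial_order_on_def preorder_on_def using field by blast
qed

lemma prod_terms_mem: "A \<in> prod_terms n \<Omega> \<Longrightarrow> i \<in> {1..n} \<Longrightarrow> A i \<in> vterms (\<Omega> i)"
  unfolding prod_terms_def by (rule PiE_mem)

lemma prod_terms_Sup_attained:
  assumes v: "\<forall>i\<in>{1..n}. vms (\<Omega> i) (M i) (N i) (S i) (T i)"
    and S: "\<forall>i\<in>{1..n}. \<forall>x\<in>{0..1}. \<forall>y\<in>{0..1}. S i x y = max x y"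
    and W: "\<forall>i\<in>{1..n}. W i \<subseteq> M i ` vterms (\<Omega> i)"
  obtains A where "A \<in> prod_terms n \<Omega>" "\<forall>i\<in>{1..n}. M i (A i) = Sup (insert 0 (W i))"
proof -
  have "\<forall>i\<in>{1..n}. \<exists>t\<in>vterms (\<Omega> i). M i t = Sup (insert 0 (W i))"
    using v S W by (blast intro: vms_Sup_attained)
  then obtain t where t: "\<forall>i\<in>{1..n}. t i \<in> vterms (\<Omega> i) \<and> M i (t i) = Sup (insert 0 (W i))"
    by (metis bchoice)
  show thesis
    by (rule that[of "restrict t {1..n}"]) (use t in \<open>auto simp: prod_terms_def\<close>)
qed

lemma class_le_lub:
  assumes v: "\<forall>i\<in>{1..n}. vms (\<Omega> i) (M i) (N i) (S i) (T i)"
    and S: "\<forall>i\<in>{1..n}. \<forall>x\<in>{0..1}. \<forall>y\<in>{0..1}. S i x y = max x y"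
    and B: "B \<subseteq> prod_terms n \<Omega> // meq n \<Omega> M"
  shows "\<exists>s. is_lub_on (prod_terms n \<Omega> // meq n \<Omega> M) (class_le n \<Omega> M) B s"
proof -
  let ?C = "prod_terms n \<Omega> // meq n \<Omega> M"
  define W where "W i = {M i (A i) | A. \<exists>X\<in>B. A \<in> X}" for i
  have in_terms: "A \<in> prod_terms n \<Omega>" if "X \<in> B" "A \<in> X" for X A
    using that B in_quotient_imp_subset[OF meq_equiv] by blast
  have M_unit: "M i (A i) \<in> {0..1}" if "A \<in> prod_terms n \<Omega>" "i \<in> {1..n}" for A i
    using v that prod_terms_mem vms_M_unit by blast
  have "\<forall>i\<in>{1..n}. W i \<subseteq> M i ` vterms (\<Omega> i)"
    unfolding W_def using in_terms prod_terms_mem by blast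
  then obtain A0 where A0: "A0 \<in> prod_terms n \<Omega>" "\<forall>i\<in>{1..n}. M i (A0 i) = Sup (insert 0 (W i))"
    using prod_terms_Sup_attained[OF v S] by blast
  define s where "s = meq n \<Omega> M `` {A0}"
  have "s \<in> ?C" unfolding s_def using A0(1) by (rule quotientI)
  moreover have "A0 \<in> s" unfolding s_def using A0(1) by (simp add: meq_def)
  ultimately have s: "s \<in> ?C" "A0 \<in> s" .
  have upper: "(X, s) \<in> class_le n \<Omega> M" if X: "X \<in> B" for X
  proof -
    obtain A where A: "A \<in> X" using in_quotient_imp_non_empty[OF meq_equiv] X B by blast
    have "M i (A i) \<le> M i (A0 i)" if i: "i \<in> {1..n}" for i
    proof -
      have "bdd_above (insert 0 (W i))" unfolding W_def
        using M_unit in_terms i by (intro bdd_aboveI[of _ 1]) auto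
      moreover have "M i (A i) \<in> insert 0 (W i)" unfolding W_def using X A by blast
      ultimately show ?thesis using A0(2) i by (simp add: cSup_upper)
    qed
    then have "mle n M A A0" by (simp add: mle_def)
    then show ?thesis using class_leI[OF _ s(1) A s(2)] X B by blast
  qed
  have least: "(s, U) \<in> class_le n \<Omega> M" if U: "U \<in> ?C" "\<forall>X\<in>B. (X, U) \<in> class_le n \<Omega> M" for U
  proof -
    obtain D where D: "D \<in> U" using in_quotient_imp_non_empty[OF meq_equiv U(1)] by blast
    have D_terms: "D \<in> prod_terms n \<Omega>" using D U(1) in_quotient_imp_subset[OF meq_equiv] by blast
    have "M i (A0 i) \<le> M i (D i)" if i: "i \<in> {1..n}" for i
    proof -
      have "w \<le> M i (D i)" if "w \<in> insert 0 (W i)" for w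
        using that M_unit[OF D_terms i] class_leD[OF _ _ D] U(2) i
        unfolding W_def mle_def by auto
      then have "Sup (insert 0 (W i)) \<le> M i (D i)" by (rule cSup_least[OF insert_not_empty])
      then show ?thesis using A0(2) i by simp
    qed
    then have "mle n M A0 D" by (simp add: mle_def)
    then show ?thesis using class_leI[OF s(1) U(1) s(2) D] by blast
  qed
  show ?thesis unfolding is_lub_on_def using s(1) upper least by blast
qed

theorem proposition6p1:
  fixes n :: nat
    and \<Omega> :: "nat \<Rightarrow> 'a set"
    and M :: "nat \<Rightarrow> 'a vterm \<Rightarrow> real"
    and N :: "nat \<Rightarrow> real \<Rightarrow> real"
    and S T :: "nat \<Rightarrow> real \<Rightarrow> real \<Rightarrow> real"
  assumes "n \<ge> 1"
    and "\<forall>i\<in>{1..n}. vms (\<Omega> i) (M i) (N i) (S i) (T i)"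
  shows "equiv (prod_terms n \<Omega>) (meq n \<Omega> M)
    \<and> (\<forall>A\<in>prod_terms n \<Omega>. \<forall>A'\<in>prod_terms n \<Omega>. \<forall>B\<in>prod_terms n \<Omega>. \<forall>B'\<in>prod_terms n \<Omega>.
         (A, A') \<in> meq n \<Omega> M \<longrightarrow> (B, B') \<in> meq n \<Omega> M \<longrightarrow> (mle n M A B \<longleftrightarrow> mle n M A' B'))
    \<and> partial_order_on (prod_terms n \<Omega> // meq n \<Omega> M) (class_le n \<Omega> M)
    \<and> ((\<forall>i\<in>{1..n}. \<forall>x\<in>{0..1}. \<forall>y\<in>{0..1}. S i x y = max x y)
         \<longrightarrow> complete_lattice_on (prod_terms n \<Omega> // meq n \<Omega> M) (class_le n \<Omega> M))"
proof -
  have "complete_lattice_on (prod_terms n \<Omega> // meq n \<Omega> M) (class_le n \<Omega> M)"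
    if "\<forall>i\<in>{1..n}. \<forall>x\<in>{0..1}. \<forall>y\<in>{0..1}. S i x y = max x y"
    using class_le_lub[OF assms(2) that]
    by (intro complete_lattice_onI_lub partial_order_on_class_le allI impI)
  then show ?thesis using meq_equiv mle_respects_meq partial_order_on_class_le by blast
qed

end
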